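(* Let $d\ge1$, $n\ge3$, $u\in\mathbb{C}\setminus\{0\}$. In $\mathrm{Y}_{d,n}(u)$: (1) $g_1r_{1,2}=[1+(u-1)e_1]r_{1,2}$; (2) $g_2r_{1,2}=[1+(u-1)e_2]r_{1,2}$; (3) $g_1g_2r_{1,2}=[1+(u-1)e_1+(u-1)e_{1,3}+(u-1)^2e_1e_2]r_{1,2}$; (4) $g_2g_1r_{1,2}=[1+(u-1)e_2+(u-1)e_{1,3}+(u-1)^2e_1e_2]r_{1,2}$; (5) $g_1g_2g_1r_{1,2}=[1+(u-1)(e_1+e_2+e_{1,3})+(u-1)^2(u+2)e_1e_2]r_{1,2}$.
   Context: The Yokonuma–Hecke algebra $\mathrm{Y}_{d,n}(u)$ is the unital associative $\mathbb{C}$-algebra with generators $g_1,\ldots,g_{n-1},t_1,\ldots,t_n$ and relations: $g_ig_j=g_jg_i$ for $|i-j|>1$; $g_{i+1}g_ig_{i+1}=g_ig_{i+1}g_i$; $t_it_j=t_jt_i$; $t_i^d=1$; $g_it_i=t_{i+1}g_i$; $g_it_{i+1}=t_ig_i$; $g_it_j=t_jg_i$ for $j\ne i,i+1$; $g_i^2=1+(u-1)e_i+(u-1)e_ig_i$, where $e_i=\frac1d\sum_{s=0}^{d-1}t_i^st_{i+1}^{d-s}$. Also $e_{i,j}=\frac1d\sum_{s=0}^{d-1}t_i^st_j^{d-s}$. For $w\in S_n$ with reduced expression $s_{i_1}\cdots s_{i_k}$ put $g_w=g_{i_1}\cdots g_{i_k}$; $g_{1,2}=\sum_{w\in S_3}g_w$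 and $r_{1,2}=\sum_{a,b=0}^{d-1}t_1^{a}t_2^{b-a}t_3^{-b}\,g_{1,2}$. *)

theory Defs
  imports Complex_Main
begin

text \<open>A unital associative complex algebra is modelled as a ring 'a together with a
unital ring homomorphism sc from the complex numbers into the centre of 'a.
Since the Yokonuma-Hecke algebra is presented by generators and relations, an
identity holds in it iff it holds for every family of elements of every complex
algebra satisfying the defining relations (universal property).\<close>

definition complex_alg :: "(complex \<Rightarrow> 'a::ring_1) \<Rightarrow> bool" where
  "complex_alg sc \<longleftrightarrow> sc 1 = 1 \<and> (\<forall>a b. sc (a + b) = sc a + sc b)
     \<and> (\<forall>a b. sc (a * b) = sc a * sc b) \<and> (\<forall>a x. sc a * x = x * sc a)"

text \<open>Integer powers of t_i; since t_i^d = 1, t_i^k = t_i^(k mod d).\<close>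
definition tp :: "nat \<Rightarrow> (nat \<Rightarrow> 'a::ring_1) \<Rightarrow> nat \<Rightarrow> int \<Rightarrow> 'a" where
  "tp d t i k = t i ^ nat (k mod int d)"

definition eij :: "nat \<Rightarrow> (complex \<Rightarrow> 'a::ring_1) \<Rightarrow> (nat \<Rightarrow> 'a) \<Rightarrow> nat \<Rightarrow> nat \<Rightarrow> 'a" where
  "eij d sc t i j = sc (1 / of_nat d) * (\<Sum>s<d. t i ^ s * t j ^ (d - s))"

definition YH_rels :: "nat \<Rightarrow> nat \<Rightarrow> complex \<Rightarrow> (complex \<Rightarrow> 'a::ring_1)
    \<Rightarrow> (nat \<Rightarrow> 'a) \<Rightarrow> (nat \<Rightarrow> 'a) \<Rightarrow> bool" where
  "YH_rels d n u sc g t \<longleftrightarrow>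
     complex_alg sc
   \<and> (\<forall>i j. 1 \<le> i \<and> i < n \<and> 1 \<le> j \<and> j < n \<and> (i + 1 < j \<or> j + 1 < i) \<longrightarrow> g i * g j = g j * g i)
   \<and> (\<forall>i. 1 \<le> i \<and> i + 1 < n \<longrightarrow> g (i+1) * g i * g (i+1) = g i * g (i+1) * g i)
   \<and> (\<forall>i j. 1 \<le> i \<and> i \<le> n \<and> 1 \<le> j \<and> j \<le> n \<longrightarrow> t i * t j = t j * t i)
   \<and> (\<forall>i. 1 \<le> i \<and> i \<le> n \<longrightarrow> t i ^ d = 1)
   \<and> (\<forall>i. 1 \<le> i \<and> i < n \<longrightarrow> g i * t i = t (i+1) * g i)
   \<and> (\<forall>i. 1 \<le> i \<and> i < n \<longrightarrow> g i * t (i+1) = t i * g i)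
   \<and> (\<forall>i j. 1 \<le> i \<and> i < n \<and> 1 \<le> j \<and> j \<le> n \<and> j \<noteq> i \<and> j \<noteq> i + 1 \<longrightarrow> g i * t j = t j * g i)
   \<and> (\<forall>i. 1 \<le> i \<and> i < n \<longrightarrow>
        g i * g i = 1 + sc (u - 1) * eij d sc t i (i+1) + sc (u - 1) * eij d sc t i (i+1) * g i)"

text \<open>g_{1,2} = sum of g_w over w in S_3.\<close>
definition g12 :: "(nat \<Rightarrow> 'a::ring_1) \<Rightarrow> 'a" where
  "g12 g = 1 + g 1 + g 2 + g 1 * g 2 + g 2 * g 1 + g 1 * g 2 * g 1"

definition r12 :: "nat \<Rightarrow> (nat \<Rightarrow> 'a::ring_1) \<Rightarrow> (nat \<Rightarrow> 'a) \<Rightarrow> 'a" where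
  "r12 d g t = (\<Sum>a<d. \<Sum>b<d. tp d t 1 (int a) * tp d t 2 (int b - int a) * tp d t 3 (- int b)) * g12 g"

end

theory Submission
  imports Defs
begin

text \<open>The toral factor $T = \sum_{a,b} t_1^a t_2^{b-a} t_3^{-b}$ of $r_{1,2}$ is invariant under
permutations of the commuting $t_1, t_2, t_3$, so $g_1$, $g_2$ and all $e_{i,j}$ commute with it.
The other factor splits as $g_{1,2} = (1 + g_1)(1 + g_2 + g_2 g_1) = (1 + g_2)(1 + g_1 + g_1 g_2)$
(the second by the braid relation), and the quadratic relation says
$g_i (1 + g_i) = (1 + (u-1) e_i)(1 + g_i)$; this gives (1) and (2).
For (3)--(5), $g_1$ and $g_2$ are moved through factors $1 + (u-1) e_{k,l}$, which permutes the
indices, and the products are expanded using that $e_i$ absorbs $t_i t_{i+1}^{-1}$: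
$e_1 e_{1,3} = e_1 e_2$, $e_2 e_{1,3} = e_2 e_1$ and $e_i^2 = e_i$.\<close>

lemma power_intertwine:
  fixes a x y :: "'a::monoid_mult"
  assumes "a * x = y * a"
  shows "a * x ^ m = y ^ m * a"
proof (induction m)
  case (Suc m)
  have "a * x ^ Suc m = (a * x ^ m) * x" by (simp only: power_Suc2 mult.assoc)
  also have "\<dots> = y ^ m * (a * x)" by (simp add: Suc mult.assoc)
  also have "\<dots> = y ^ Suc m * a" by (simp only: assms power_Suc2 mult.assoc)
  finally show ?case .
qed simp

lemma one_plus_intertwine:
  fixes a c x y :: "'a::semiring_1"
  assumes "a * c = c * a" and "a * x = y * a"
  shows "a * (1 + c * x) = (1 + c * y) * a"
  by (simp add: distrib_left distrib_right flip: mult.assoc) (simp add: assms mult.assoc)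

lemma mult_power_eq_if_mult_eq:
  fixes p x y :: "'a::monoid_mult"
  assumes "p * x = p * y" and "x * y = y * x"
  shows "p * x ^ k = p * y ^ k"
proof (induction k)
  case (Suc k)
  have "p * x ^ Suc k = (p * x ^ k) * x" by (simp only: power_Suc2 mult.assoc)
  also have "\<dots> = (p * x) * y ^ k"
    by (simp add: Suc mult.assoc power_commuting_commutes[OF assms(2)[symmetric]])
  also have "\<dots> = p * y ^ Suc k" by (simp add: assms(1) mult.assoc)
  finally show ?case .
qed simp

definition esum :: "nat \<Rightarrow> 'a::semiring_1 \<Rightarrow> 'a \<Rightarrow> 'a" where
  "esum d x y = (\<Sum>s<d. x ^ s * y ^ (d - s))"

lemma esum_intertwine:
  fixes a x y x' y' :: "'a::semiring_1"
  assumes "a * x = x' * a" and "a * y = y' * a"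
  shows "a * esum d x y = esum d x' y' * a"
  unfolding esum_def sum_distrib_left sum_distrib_right
  by (rule sum.cong) (simp_all add: power_intertwine[OF assms(1)] power_intertwine[OF assms(2)]
      mult.assoc flip: mult.assoc[of a])

lemma esum_mult_eq:
  fixes x y :: "'a::semiring_1_cancel"
  assumes "x * y = y * x" and "x ^ d = 1" and "y ^ d = 1"
  shows "esum d x y * x = esum d x y * y"
proof -
  define f where "f s = x ^ s * y ^ (Suc d - s)" for s
  have "x ^ s * y ^ (d - s) * x = f (Suc s)" for s
    unfolding f_def
    by (metis diff_Suc_Suc mult.assoc power_Suc2 power_commuting_commutes assms(1))
  then have "esum d x y * x = (\<Sum>s<d. f (Suc s))"
    by (simp add: esum_def sum_distrib_right)
  also have "\<dots> = (\<Sum>s<d. f s)"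
  proof -
    have "f 0 = f d" by (simp add: f_def assms)
    then show ?thesis
      using sum.lessThan_Suc_shift[of f d] sum.lessThan_Suc[of f d] by (simp add: add.commute)
  qed
  also have "\<dots> = esum d x y * y"
    unfolding esum_def sum_distrib_right f_def
    by (rule sum.cong) (simp_all add: Suc_diff_le mult.assoc flip: power_Suc2)
  finally show ?thesis .
qed

lemma mult_esum_left_eq:
  fixes p x y z :: "'a::semiring_1"
  assumes "p * x = p * y" and "x * y = y * x"
  shows "p * esum d x z = p * esum d y z"
  unfolding esum_def sum_distrib_left
  by (simp add: mult_power_eq_if_mult_eq[OF assms] flip: mult.assoc)

lemma mult_esum_right_eq:
  fixes p w x y :: "'a::semiring_1"
  assumes "p * x = p * y" and "x * y = y * x" and "p * w = w * p"
  shows "p * esum d w x = p * esum d w y"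
proof -
  have "p * (w ^ k * x ^ m) = p * (w ^ k * y ^ m)" for k m
    using power_commuting_commutes[OF assms(3)[symmetric]] mult_power_eq_if_mult_eq[OF assms(1,2)]
    by (metis mult.assoc)
  then show ?thesis by (simp add: esum_def sum_distrib_left)
qed

lemma esum_mult_self:
  fixes x y :: "'a::semiring_1_cancel"
  assumes "x * y = y * x" and "x ^ d = 1" and "y ^ d = 1"
  shows "esum d x y * esum d x y = of_nat d * esum d x y"
proof -
  let ?p = "esum d x y"
  have "?p * (x ^ k * y ^ (d - k)) = ?p" if "k < d" for k
  proof -
    have "?p * (x ^ k * y ^ (d - k)) = ?p * y ^ (k + (d - k))"
      using mult_power_eq_if_mult_eq[OF esum_mult_eq[OF assms] assms(1)]
      by (simp add: power_add flip: mult.assoc)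
    then show ?thesis using that assms(3) by simp
  qed
  then have "?p * (\<Sum>k<d. x ^ k * y ^ (d - k)) = (\<Sum>k<d. ?p)"
    by (simp add: sum_distrib_left)
  then show ?thesis by (simp add: esum_def[of d x y])
qed

definition zpower :: "nat \<Rightarrow> 'a::monoid_mult \<Rightarrow> int \<Rightarrow> 'a" where
  "zpower d x k = x ^ nat (k mod int d)"

lemma zpower_cong: "k mod int d = l mod int d \<Longrightarrow> zpower d x k = zpower d x l"
  by (simp add: zpower_def)

lemma zpower_intertwine:
  fixes a x y :: "'a::monoid_mult"
  assumes "a * x = y * a"
  shows "a * zpower d x k = zpower d y k * a"
  unfolding zpower_def by (rule power_intertwine[OF assms])

lemma zpower_commute:
  fixes x y :: "'a::monoid_mult"
  assumes "x * y = y * x"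
  shows "zpower d x k * zpower d y l = zpower d y l * zpower d x k"
  unfolding zpower_def by (metis assms power_commuting_commutes)

lemma sum_lessThan_reflect_mod:
  fixes f :: "int \<Rightarrow> 'b::comm_monoid_add"
  assumes "0 < d"
  shows "(\<Sum>a<d. f ((k - int a) mod int d)) = (\<Sum>a<d. f (int a))"
proof -
  define \<rho> where "\<rho> a = nat ((k - int a) mod int d)" for a
  have \<rho>_less: "\<rho> a < d" for a
    using assms by (simp add: \<rho>_def nat_less_iff)
  have \<rho>_involution: "\<rho> (\<rho> a) = a" if "a < d" for a
    using assms that by (simp add: \<rho>_def mod_diff_right_eq)
  show ?thesis
    by (rule sum.reindex_bij_witness[where i=\<rho> and j=\<rho>])
      (use assms \<rho>_less \<rho>_involution in \<open>auto simp: \<rho>_def\<close>)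
qed

definition triple_sum :: "nat \<Rightarrow> 'a::semiring_1 \<Rightarrow> 'a \<Rightarrow> 'a \<Rightarrow> 'a" where
  "triple_sum d x y z =
     (\<Sum>a<d. \<Sum>b<d. zpower d x (int a) * zpower d y (int b - int a) * zpower d z (- int b))"

lemma triple_sum_intertwine:
  fixes a x y z x' y' z' :: "'a::semiring_1"
  assumes "a * x = x' * a" and "a * y = y' * a" and "a * z = z' * a"
  shows "a * triple_sum d x y z = triple_sum d x' y' z' * a"
  unfolding triple_sum_def sum_distrib_left sum_distrib_right
  by (simp add: zpower_intertwine[OF assms(1)] zpower_intertwine[OF assms(2)]
      zpower_intertwine[OF assms(3)] mult.assoc flip: mult.assoc[of a])

lemma triple_sum_swap12:
  fixes x y z :: "'a::semiring_1"
  assumes "x * y = y * x" and "0 < d"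
  shows "triple_sum d x y z = triple_sum d y x z"
proof -
  have "(\<Sum>a<d. zpower d x (int a) * zpower d y (int b - int a) * zpower d z (- int b))
      = (\<Sum>a<d. zpower d y (int a) * zpower d x (int b - int a) * zpower d z (- int b))" for b
  proof -
    define f where "f m = zpower d y m * zpower d x (int b - m) * zpower d z (- int b)" for m
    have "f ((int b - int a) mod int d)
        = zpower d x (int a) * zpower d y (int b - int a) * zpower d z (- int b)" for a
    proof -
      have "zpower d y ((int b - int a) mod int d) = zpower d y (int b - int a)"
        by (rule zpower_cong) simp
      moreover have "zpower d x (int b - (int b - int a) mod int d) = zpower d x (int a)"
        by (rule zpower_cong) (simp add: mod_diff_right_eq)
      ultimately show ?thesis
        by (simp add: f_def zpower_commute[OF assms(1)])
    qed
    then show ?thesis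
      using sum_lessThan_reflect_mod[OF assms(2), of f "int b"] by (simp add: f_def)
  qed
  then show ?thesis
    unfolding triple_sum_def by (subst (1 2) sum.swap) simp
qed

lemma triple_sum_swap23:
  fixes x y z :: "'a::semiring_1"
  assumes "y * z = z * y" and "0 < d"
  shows "triple_sum d x y z = triple_sum d x z y"
proof -
  have "(\<Sum>b<d. zpower d x (int a) * zpower d y (int b - int a) * zpower d z (- int b))
      = (\<Sum>b<d. zpower d x (int a) * zpower d z (int b - int a) * zpower d y (- int b))" for a
  proof -
    define f where "f m = zpower d x (int a) * zpower d z (m - int a) * zpower d y (- m)" for m
    have "f ((int a - int b) mod int d)
        = zpower d x (int a) * zpower d y (int b - int a) * zpower d z (- int b)" for b
    proof -
      have "zpower d z ((int a - int b) mod int d - int a) = zpower d z (- int b)"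
        by (rule zpower_cong) (simp add: mod_diff_left_eq)
      moreover have "zpower d y (- ((int a - int b) mod int d)) = zpower d y (int b - int a)"
        by (rule zpower_cong) (simp add: mod_minus_eq)
      ultimately show ?thesis
        by (simp add: f_def zpower_commute[OF assms(1)] mult.assoc)
    qed
    then show ?thesis
      using sum_lessThan_reflect_mod[OF assms(2), of f "int a"] by (simp add: f_def)
  qed
  then show ?thesis
    unfolding triple_sum_def by simp
qed

lemma g12_eq_left: "g12 g = (1 + g 1) * (1 + g 2 + g 2 * g 1)"
  by (simp add: g12_def algebra_simps)

lemma g12_eq_right:
  assumes "g 2 * g 1 * g 2 = g 1 * g 2 * g 1"
  shows "g12 g = (1 + g 2) * (1 + g 1 + g 1 * g 2)"
  using assms by (simp add: g12_def algebra_simps)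

lemma quadratic_mult_one_plus:
  fixes g c e :: "'a::semiring_1"
  assumes "g * g = 1 + c * e + c * e * g"
  shows "g * (1 + g) = (1 + c * e) * (1 + g)"
  using assms by (simp add: algebra_simps)

lemma one_plus_mult_one_plus:
  fixes c x y :: "'a::semiring_1"
  assumes "x * c = c * x"
  shows "(1 + c * x) * (1 + c * y) = 1 + c * x + c * y + c * c * (x * y)"
proof -
  have "x * (c * y) = c * (x * y)" using assms by (metis mult.assoc)
  then show ?thesis by (simp add: distrib_left distrib_right add.assoc mult.assoc)
qed

lemma one_plus_mult_one_plus_mult_one_plus:
  fixes c x y z E :: "'a::ring_1"
  assumes xc: "x * c = c * x" and yc: "y * c = c * y"
    and xy: "x * y = E" and xz: "x * z = E" and yz: "y * z = E" and xE: "x * E = E"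
  shows "(1 + c * x) * (1 + c * y) * (1 + c * z) = 1 + c * (x + y + z) + c * c * (c + 3) * E"
proof -
  have xc': "x * (c * w) = c * (x * w)" and yc': "y * (c * w) = c * (y * w)" for w
    by (simp_all flip: mult.assoc add: xc yc)
  have xy': "x * (y * w) = E * w" and xz': "x * (z * w) = E * w" and yz': "y * (z * w) = E * w" for w
    by (simp_all flip: mult.assoc add: xy xz yz)
  have Ez: "E * z = E" by (metis xy yz xE mult.assoc)
  have Ec': "E * (c * w) = c * (E * w)" for w by (metis xy xc' yc' mult.assoc)
  have "(3::'a) = 1 + 1 + 1" by simp
  then have three: "(3::'a) * E = E + E + E" by (simp only: distrib_right mult_1_left)
  show ?thesis
    by (simp add: algebra_simps xc' yc' xy' xz' yz' Ez Ec' three xy xz yz xE)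
qed

lemma complex_alg_central: "complex_alg sc \<Longrightarrow> sc a * x = x * sc a"
  by (simp add: complex_alg_def)

lemma complex_alg_add: "complex_alg sc \<Longrightarrow> sc (a + b) = sc a + sc b"
  by (simp add: complex_alg_def)

lemma complex_alg_of_nat:
  assumes "complex_alg sc"
  shows "sc (of_nat m) = of_nat m"
proof (induction m)
  case 0
  show ?case using complex_alg_add[OF assms, of 0 0] by simp
next
  case (Suc m)
  then show ?case
    using complex_alg_add[OF assms, of 1 "of_nat m"] assms by (simp add: complex_alg_def)
qed

lemma complex_alg_inverse_of_nat:
  assumes "complex_alg sc" and "0 < d"
  shows "sc (1 / of_nat d) * of_nat d = 1"
proof -
  have "sc (1 / of_nat d) * of_nat d = sc (1 / of_nat d * of_nat d)"
    using assms(1) unfolding complex_alg_def by (metis complex_alg_of_nat[OF assms(1)])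
  also have "\<dots> = 1"
    using assms unfolding complex_alg_def by simp
  finally show ?thesis .
qed

lemma eij_eq_esum: "eij d sc t i j = sc (1 / of_nat d) * esum d (t i) (t j)"
  by (simp add: eij_def esum_def)

lemma r12_eq_triple_sum: "r12 d g t = triple_sum d (t 1) (t 2) (t 3) * g12 g"
  by (simp add: r12_def triple_sum_def tp_def zpower_def)

text \<open>The relations of $\mathrm{Y}_{d,n}(u)$ among $g_1, g_2, t_1, t_2, t_3$, the only generators
occurring in $r_{1,2}$.\<close>

locale yokonuma_hecke_3 =
  fixes d :: nat and u :: complex and sc :: "complex \<Rightarrow> 'a::ring_1" and g t :: "nat \<Rightarrow> 'a"
  assumes d_pos: "0 < d"
    and complex_alg: "complex_alg sc"
    and t_commute: "i \<in> {1,2,3} \<Longrightarrow> j \<in> {1,2,3} \<Longrightarrow> t i * t j = t j * t i"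
    and t_power_d: "i \<in> {1,2,3} \<Longrightarrow> t i ^ d = 1"
    and g1_t: "g 1 * t 1 = t 2 * g 1" "g 1 * t 2 = t 1 * g 1" "g 1 * t 3 = t 3 * g 1"
    and g2_t: "g 2 * t 1 = t 1 * g 2" "g 2 * t 2 = t 3 * g 2" "g 2 * t 3 = t 2 * g 2"
    and braid: "g 2 * g 1 * g 2 = g 1 * g 2 * g 1"
    and quadratic: "(i, j) \<in> {(1, 2), (2, 3)} \<Longrightarrow>
      g i * g i = 1 + sc (u - 1) * eij d sc t i j + sc (u - 1) * eij d sc t i j * g i"

lemma yokonuma_hecke_3_if_YH_rels:
  assumes "YH_rels d n u sc g t" and "3 \<le> n" and "1 \<le> d"
  shows "yokonuma_hecke_3 d u sc g t"
proof -
  note rels = assms(1)[unfolded YH_rels_def]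
  have braid: "g j * g i * g j = g i * g j * g i" if "1 \<le> i" "j < n" "j = i + 1" for i j
    using rels that by blast
  have t_commute: "t i * t j = t j * t i" if "1 \<le> i" "i \<le> n" "1 \<le> j" "j \<le> n" for i j
    using rels that by blast
  have t_power_d: "t i ^ d = 1" if "1 \<le> i" "i \<le> n" for i
    using rels that by blast
  have g_t_same: "g i * t i = t j * g i" if "1 \<le> i" "i < n" "j = i + 1" for i j
    using rels that by blast
  have g_t_next: "g i * t j = t i * g i" if "1 \<le> i" "i < n" "j = i + 1" for i j
    using rels that by blast
  have g_t_other: "g i * t j = t j * g i"
    if "1 \<le> i" "i < n" "1 \<le> j" "j \<le> n" "j \<noteq> i" "j \<noteq> i + 1" for i j
    using rels that by blast
  have quadratic: "g i * g i = 1 + sc (u - 1) * eij d sc t i j + sc (u - 1) * eij d sc t i j * g i"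
    if "1 \<le> i" "i < n" "j = i + 1" for i j
    using rels that by blast
  show ?thesis
  proof
    show "0 < d" using assms(3) by simp
    show "complex_alg sc" using rels by blast
    show "t i * t j = t j * t i" if "i \<in> {1,2,3}" "j \<in> {1,2,3}" for i j
      using t_commute that assms(2) by auto
    show "t i ^ d = 1" if "i \<in> {1,2,3}" for i
      using t_power_d that assms(2) by auto
    show "g 1 * t 1 = t 2 * g 1" "g 2 * t 2 = t 3 * g 2"
      using g_t_same[of 1 2] g_t_same[of 2 3] assms(2) by simp_all
    show "g 1 * t 2 = t 1 * g 1" "g 2 * t 3 = t 2 * g 2"
      using g_t_next[of 1 2] g_t_next[of 2 3] assms(2) by simp_all
    show "g 1 * t 3 = t 3 * g 1" "g 2 * t 1 = t 1 * g 2"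
      using g_t_other[of 1 3] g_t_other[of 2 1] assms(2) by simp_all
    show "g 2 * g 1 * g 2 = g 1 * g 2 * g 1"
      using braid[of 1 2] assms(2) by simp
    show "g i * g i = 1 + sc (u - 1) * eij d sc t i j + sc (u - 1) * eij d sc t i j * g i"
      if "(i, j) \<in> {(1, 2), (2, 3)}" for i j
      using that quadratic[of 1 2] quadratic[of 2 3] assms(2) by auto
  qed
qed

context yokonuma_hecke_3
begin

abbreviation "c \<equiv> sc (u - 1)"
abbreviation "e \<equiv> eij d sc t"
abbreviation "T \<equiv> triple_sum d (t 1) (t 2) (t 3)"

lemma sc_central: "sc a * x = x * sc a"
  by (rule complex_alg_central[OF complex_alg])

lemma T_commute_t: "i \<in> {1,2,3} \<Longrightarrow> t i * T = T * t i"
  by (rule triple_sum_intertwine) (simp_all add: t_commute)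

lemma e_intertwine:
  assumes "a * t i = t i' * a" and "a * t j = t j' * a"
  shows "a * e i j = e i' j' * a"
  unfolding eij_eq_esum using esum_intertwine[OF assms]
  by (metis sc_central mult.assoc)

lemma e_commute_t:
  "i \<in> {1,2,3} \<Longrightarrow> j \<in> {1,2,3} \<Longrightarrow> k \<in> {1,2,3} \<Longrightarrow> t k * e i j = e i j * t k"
  by (rule e_intertwine) (simp_all add: t_commute)

lemma e_commute_T: "i \<in> {1,2,3} \<Longrightarrow> j \<in> {1,2,3} \<Longrightarrow> T * e i j = e i j * T"
  by (rule e_intertwine; metis T_commute_t)

lemma e_commute:
  "i \<in> {1,2,3} \<Longrightarrow> j \<in> {1,2,3} \<Longrightarrow> k \<in> {1,2,3} \<Longrightarrow> l \<in> {1,2,3} \<Longrightarrow>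
    e i j * e k l = e k l * e i j"
  by (rule e_intertwine; metis e_commute_t)

lemma g_commute_T: "i \<in> {1,2} \<Longrightarrow> g i * T = T * g i"
proof (elim insertE emptyE)
  assume "i = 1"
  then show ?thesis
    using triple_sum_intertwine[OF g1_t] triple_sum_swap12[OF t_commute d_pos] by simp
next
  assume "i = 2"
  then show ?thesis
    using triple_sum_intertwine[OF g2_t] triple_sum_swap23[OF t_commute d_pos] by simp
qed

lemma g_mult_g12:
  assumes ij: "(i, j) \<in> {(1, 2), (2, 3)}"
  shows "g i * g12 g = (1 + c * e i j) * g12 g"
proof -
  obtain H where H: "g12 g = (1 + g i) * H"
    using ij g12_eq_left[of g] g12_eq_right[OF braid] by fastforce
  have "g i * g12 g = (g i * (1 + g i)) * H"
    by (simp add: H mult.assoc)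
  also have "\<dots> = (1 + c * e i j) * g12 g"
    by (simp add: quadratic_mult_one_plus[OF quadratic[OF ij]] H mult.assoc)
  finally show ?thesis .
qed

lemma g_mult_r12:
  assumes ij: "(i, j) \<in> {(1, 2), (2, 3)}"
  shows "g i * r12 d g t = (1 + c * e i j) * r12 d g t"
proof -
  have i: "i \<in> {1,2}" using ij by auto
  have T_commute: "T * (1 + c * e i j) = (1 + c * e i j) * T"
    using ij by (intro one_plus_intertwine sc_central[symmetric] e_commute_T) auto
  have "g i * r12 d g t = (g i * T) * g12 g"
    by (simp only: r12_eq_triple_sum mult.assoc)
  also have "\<dots> = (T * (1 + c * e i j)) * g12 g"
    by (simp only: g_commute_T[OF i] g_mult_g12[OF ij] mult.assoc)
  also have "\<dots> = (1 + c * e i j) * r12 d g t"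
    by (simp only: T_commute r12_eq_triple_sum mult.assoc)
  finally show ?thesis .
qed

lemma e_mult_e:
  "e i j * e k l
     = sc (1 / of_nat d) * sc (1 / of_nat d) * (esum d (t i) (t j) * esum d (t k) (t l))"
proof -
  have "esum d (t i) (t j) * (sc (1 / of_nat d) * esum d (t k) (t l))
      = sc (1 / of_nat d) * (esum d (t i) (t j) * esum d (t k) (t l))"
    by (simp only: sc_central[of _ "esum d (t i) (t j)", symmetric] flip: mult.assoc)
  then show ?thesis by (simp only: eij_eq_esum mult.assoc)
qed

lemma e_idem:
  assumes ij: "(i, j) \<in> {(1, 2), (2, 3)}"
  shows "e i j * e i j = e i j"
proof -
  define L where "L = sc (1 / of_nat d)"
  define P where "P = esum d (t i) (t j)"
  have "P * P = of_nat d * P"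
    unfolding P_def using ij by (intro esum_mult_self t_commute t_power_d) auto
  then have "e i j * e i j = L * (L * of_nat d) * P"
    by (simp add: e_mult_e L_def P_def mult.assoc)
  also have "\<dots> = e i j"
    by (simp add: L_def P_def eij_eq_esum complex_alg_inverse_of_nat[OF complex_alg d_pos])
  finally show ?thesis .
qed

lemma e12_mult_e13: "e 1 2 * e 1 3 = e 1 2 * e 2 3"
proof -
  have "esum d (t 1) (t 2) * esum d (t 1) (t 3) = esum d (t 1) (t 2) * esum d (t 2) (t 3)"
    by (rule mult_esum_left_eq; rule esum_mult_eq t_commute; simp add: t_commute t_power_d)
  then show ?thesis unfolding e_mult_e by simp
qed

lemma e23_mult_e13: "e 2 3 * e 1 3 = e 2 3 * e 1 2"
proof -
  have "esum d (t 2) (t 3) * esum d (t 1) (t 3) = esum d (t 2) (t 3) * esum d (t 1) (t 2)"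
  proof (rule mult_esum_right_eq)
    show "esum d (t 2) (t 3) * t 3 = esum d (t 2) (t 3) * t 2"
      by (intro esum_mult_eq[symmetric] t_commute t_power_d) auto
    show "esum d (t 2) (t 3) * t 1 = t 1 * esum d (t 2) (t 3)"
      by (intro esum_intertwine[symmetric] t_commute) auto
  qed (simp add: t_commute)
  then show ?thesis unfolding e_mult_e by simp
qed

lemma g1_e23: "g 1 * e 2 3 = e 1 3 * g 1"
  by (rule e_intertwine; rule g1_t)

lemma g1_e13: "g 1 * e 1 3 = e 2 3 * g 1"
  by (rule e_intertwine; rule g1_t)

lemma g2_e12: "g 2 * e 1 2 = e 1 3 * g 2"
  by (rule e_intertwine; rule g2_t)

lemma e13_mult_e12: "e 1 3 * e 1 2 = e 1 2 * e 2 3"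
  using e12_mult_e13 e_commute[of 1 2 1 3] by simp

lemma e13_mult_e23: "e 1 3 * e 2 3 = e 1 2 * e 2 3"
  using e23_mult_e13 e_commute[of 1 3 2 3] e_commute[of 1 2 2 3] by simp

lemma e23_mult_e12: "e 2 3 * e 1 2 = e 1 2 * e 2 3"
  using e_commute[of 1 2 2 3] by simp

lemma g1_r12: "g 1 * r12 d g t = (1 + c * e 1 2) * r12 d g t"
  by (rule g_mult_r12) simp

lemma g2_r12: "g 2 * r12 d g t = (1 + c * e 2 3) * r12 d g t"
  by (rule g_mult_r12) simp

lemma g1_g2_r12_factored: "g 1 * g 2 * r12 d g t = (1 + c * e 1 3) * (1 + c * e 1 2) * r12 d g t"
proof -
  have "g 1 * g 2 * r12 d g t = g 1 * (1 + c * e 2 3) * r12 d g t"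
    by (simp only: g2_r12 mult.assoc)
  also have "\<dots> = (1 + c * e 1 3) * (g 1 * r12 d g t)"
    by (simp only: one_plus_intertwine[OF sc_central[symmetric] g1_e23] mult.assoc)
  finally show ?thesis by (simp only: g1_r12 mult.assoc)
qed

lemma g2_g1_r12_factored: "g 2 * g 1 * r12 d g t = (1 + c * e 1 3) * (1 + c * e 2 3) * r12 d g t"
proof -
  have "g 2 * g 1 * r12 d g t = g 2 * (1 + c * e 1 2) * r12 d g t"
    by (simp only: g1_r12 mult.assoc)
  also have "\<dots> = (1 + c * e 1 3) * (g 2 * r12 d g t)"
    by (simp only: one_plus_intertwine[OF sc_central[symmetric] g2_e12] mult.assoc)
  finally show ?thesis by (simp only: g2_r12 mult.assoc)
qed

lemma g1_g2_g1_r12_factored: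
  "g 1 * g 2 * g 1 * r12 d g t = (1 + c * e 2 3) * (1 + c * e 1 3) * (1 + c * e 1 2) * r12 d g t"
proof -
  have "g 1 * g 2 * g 1 * r12 d g t = g 1 * (1 + c * e 1 3) * ((1 + c * e 2 3) * r12 d g t)"
    by (simp only: g2_g1_r12_factored[unfolded mult.assoc] mult.assoc)
  also have "\<dots> = (1 + c * e 2 3) * (g 1 * (1 + c * e 2 3) * r12 d g t)"
    by (simp only: one_plus_intertwine[OF sc_central[symmetric] g1_e13] mult.assoc)
  also have "g 1 * (1 + c * e 2 3) * r12 d g t = g 1 * g 2 * r12 d g t"
    by (simp only: g2_r12 mult.assoc)
  finally show ?thesis by (simp only: g1_g2_r12_factored[unfolded mult.assoc] mult.assoc)
qed

lemma e23_mult_e12_e23: "e 2 3 * (e 1 2 * e 2 3) = e 1 2 * e 2 3"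
proof -
  have "e 2 3 * e 2 3 = e 2 3" by (rule e_idem) simp
  then show ?thesis by (simp only: e23_mult_e12 mult.assoc flip: mult.assoc[of "e 2 3"])
qed

lemma sc_u_plus_2: "sc (u + 2) = c + 3"
proof -
  have "u + 2 = (u - 1) + of_nat 3" by simp
  then have "sc (u + 2) = c + sc (of_nat 3)"
    by (simp only: complex_alg_add[OF complex_alg])
  then show ?thesis
    using complex_alg_of_nat[OF complex_alg, of 3] by simp
qed

lemma g1_g2_r12:
  "g 1 * g 2 * r12 d g t = (1 + c * e 1 2 + c * e 1 3 + c * c * e 1 2 * e 2 3) * r12 d g t"
  unfolding g1_g2_r12_factored one_plus_mult_one_plus[OF sc_central[symmetric]] e13_mult_e12
  by (simp only: add_ac mult.assoc)

lemma g2_g1_r12: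
  "g 2 * g 1 * r12 d g t = (1 + c * e 2 3 + c * e 1 3 + c * c * e 1 2 * e 2 3) * r12 d g t"
  unfolding g2_g1_r12_factored one_plus_mult_one_plus[OF sc_central[symmetric]] e13_mult_e23
  by (simp only: add_ac mult.assoc)

lemma g1_g2_g1_r12:
  "g 1 * g 2 * g 1 * r12 d g t
     = (1 + c * (e 1 2 + e 2 3 + e 1 3) + c * c * sc (u + 2) * e 1 2 * e 2 3) * r12 d g t"
proof -
  have "(1 + c * e 2 3) * (1 + c * e 1 3) * (1 + c * e 1 2)
      = 1 + c * (e 2 3 + e 1 3 + e 1 2) + c * c * (c + 3) * (e 1 2 * e 2 3)"
    by (rule one_plus_mult_one_plus_mult_one_plus[OF sc_central[symmetric] sc_central[symmetric]])
      (simp_all only: e23_mult_e13 e23_mult_e12 e13_mult_e12 e23_mult_e12_e23)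
  then show ?thesis
    unfolding g1_g2_g1_r12_factored sc_u_plus_2 by (simp only: add_ac mult.assoc)
qed

end

theorem lemma5:
  fixes d n :: nat and u :: complex and sc :: "complex \<Rightarrow> 'a::ring_1"
    and g t :: "nat \<Rightarrow> 'a"
  assumes "d \<ge> 1" and "n \<ge> 3" and "u \<noteq> 0"
    and "YH_rels d n u sc g t"
  defines "e \<equiv> eij d sc t" and "r \<equiv> r12 d g t" and "c \<equiv> sc (u - 1)"
  shows "g 1 * r = (1 + c * e 1 2) * r
    \<and> g 2 * r = (1 + c * e 2 3) * r
    \<and> g 1 * g 2 * r = (1 + c * e 1 2 + c * e 1 3 + c * c * e 1 2 * e 2 3) * r
    \<and> g 2 * g 1 * r = (1 + c * e 2 3 + c * e 1 3 + c * c * e 1 2 * e 2 3) * r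
    \<and> g 1 * g 2 * g 1 * r
           = (1 + c * (e 1 2 + e 2 3 + e 1 3) + c * c * sc (u + 2) * e 1 2 * e 2 3) * r"
proof -
  interpret yokonuma_hecke_3 d u sc g t
    using yokonuma_hecke_3_if_YH_rels[OF assms(4,2,1)] .
  show ?thesis
    unfolding e_def r_def c_def
    using g1_r12 g2_r12 g1_g2_r12 g2_g1_r12 g1_g2_g1_r12 by blast
qed

end
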